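(* Suppose the index function satisfies $0\le n(\eta)<5$ for all $\eta>0$. Then along the orbit of every regular perfect fluid solution in the variables $(U,Q,\Omega)$ one has $\Phi(U,Q):=(4-7Q)U-3(1-2Q)>0$, i.e. the regular solutions lie on the outer side of the surface $\{\Phi=0\}$, which is the set of regular orbits of the exact polytrope with index $5$. Moreover, on the surface $\{\Phi=0\}$ within the interior of the cube, $\frac{d\Phi}{d\lambda}=3(1-2Q)(1-U)^2Q\,(5-n(\Omega))$, where $Q\le1/2$ on this surface.
   Context: Equation of state: $\rho=\rho(p)$ with $\rho>0$ for $p>0$, $\eta(p)=\int_0^p dp'/\rho(p')$ finite; index function $n(\eta)=\frac{\eta}{\rho}\frac{d\rho}{d\eta}$. Regular perfect fluid solution: solution of $dm/dr=4\pi r^2\rho(p)$, $dp/dr=-m\rho(p)/r^2$ with $m\to0$, $p\to p_c\in(0,\infty)$ as $r\to0$. Variables: $U=u/(1+u)$, $Q=q/(1+q)$, $\Omega=\omega/(1+\omega)$ with $u=4\pi r^3\rho/m$, $q=m/(r\eta)$, $\omega=\eta^a$ ($a>0$), satisfying $\frac{dU}{d\lambda}=U(1-U)[(1-Q)(3-4U)-n(\Omega)Q(1-U)]$, $\frac{dQ}{d\lambda}=Q(1-Q)[(2U-1)(1-Q)+Q(1-U)]$, $\frac{d\Omega}{d\lambda}=-a\Omega(1-\Omega)Q(1-U)$ on the cube $[0,1]^3$, where $n(\Omega)=n(\eta)$ at $\eta=(\Omega/(1-\Omega))^{1/a}$. Regular orbits emanate as $\lambda\to-\infty$ from the line $\{U=3/4,Q=0\}$.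 *)

theory Defs
  imports "HOL-Analysis.Analysis"
begin

definition eta :: "(real \<Rightarrow> real) \<Rightarrow> real \<Rightarrow> real" where
  "eta \<rho> p = integral {0..p} (\<lambda>s. 1 / \<rho> s)"

definition pres_of_eta :: "(real \<Rightarrow> real) \<Rightarrow> real \<Rightarrow> real" where
  "pres_of_eta \<rho> e = (THE p. 0 < p \<and> eta \<rho> p = e)"

definition n_index :: "(real \<Rightarrow> real) \<Rightarrow> real \<Rightarrow> real" where
  "n_index \<rho> e = e / \<rho> (pres_of_eta \<rho> e) * deriv (\<lambda>x. \<rho> (pres_of_eta \<rho> x)) e"

definition n_Omega :: "(real \<Rightarrow> real) \<Rightarrow> real \<Rightarrow> real \<Rightarrow> real" where
  "n_Omega \<rho> a \<Omega> = n_index \<rho> ((\<Omega> / (1 - \<Omega>)) powr (1 / a))"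

definition regular_solution ::
  "(real \<Rightarrow> real) \<Rightarrow> real \<Rightarrow> (real \<Rightarrow> real) \<Rightarrow> (real \<Rightarrow> real) \<Rightarrow> real \<Rightarrow> bool" where
  "regular_solution \<rho> R m p pc \<longleftrightarrow>
     0 < pc \<and>
     (\<forall>r\<in>{0<..<R}. 0 < p r \<and>
        (m has_real_derivative 4 * pi * r\<^sup>2 * \<rho> (p r)) (at r) \<and>
        (p has_real_derivative - (m r * \<rho> (p r)) / r\<^sup>2) (at r)) \<and>
     (m \<longlongrightarrow> 0) (at_right 0) \<and> (p \<longlongrightarrow> pc) (at_right 0)"

definition Phi :: "real \<Rightarrow> real \<Rightarrow> real" where
  "Phi U Q = (4 - 7 * Q) * U - 3 * (1 - 2 * Q)"

definition U_var :: "(real \<Rightarrow> real) \<Rightarrow> (real \<Rightarrow> real) \<Rightarrow> (real \<Rightarrow> real) \<Rightarrow> real \<Rightarrow> real" where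
  "U_var \<rho> m p r = (let u = 4 * pi * r ^ 3 * \<rho> (p r) / m r in u / (1 + u))"

definition Q_var :: "(real \<Rightarrow> real) \<Rightarrow> (real \<Rightarrow> real) \<Rightarrow> (real \<Rightarrow> real) \<Rightarrow> real \<Rightarrow> real" where
  "Q_var \<rho> m p r = (let q = m r / (r * eta \<rho> (p r)) in q / (1 + q))"

text \<open>Vector field components (with n the value n(Omega)).\<close>
definition FU :: "real \<Rightarrow> real \<Rightarrow> real \<Rightarrow> real" where
  "FU n U Q = U * (1 - U) * ((1 - Q) * (3 - 4 * U) - n * Q * (1 - U))"

definition FQ :: "real \<Rightarrow> real \<Rightarrow> real" where
  "FQ U Q = Q * (1 - Q) * ((2 * U - 1) * (1 - Q) + Q * (1 - U))"

end

theory Submission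
  imports Defs
begin

text \<open>
  Since \<open>\<Phi>(U,Q) (1+u)(1+q) = u + 3q - 3\<close>, the sign of \<open>\<Phi>\<close> along a regular solution
  is that of \<open>G = m \<eta> (u + 3q - 3) = 4\<pi> r\<^sup>3 \<rho> \<eta> + 3 m\<^sup>2/r - 3 m \<eta>\<close>.
  From \<open>d\<eta>/dr = -m/r\<^sup>2\<close> and \<open>d\<rho>/dr = -(n/\<eta>) \<rho> m/r\<^sup>2\<close> one gets
  \<open>dG/dr = 4\<pi> r \<rho> m (5 - n)\<close>, positive when \<open>n < 5\<close>; since \<open>G\<close> is bounded below
  by a quantity tending to \<open>0\<close> at the centre, \<open>G > 0\<close>.
  The second claim is a polynomial identity modulo \<open>\<Phi>\<close>.
\<close>

locale barotropic_eos =
  fixes \<rho> :: "real \<Rightarrow> real"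
  assumes density_pos: "0 < x \<Longrightarrow> 0 < \<rho> x"
    and density_differentiable: "0 < x \<Longrightarrow> \<rho> differentiable (at x)"
    and inverse_density_integrable: "0 < x \<Longrightarrow> (\<lambda>s. 1 / \<rho> s) integrable_on {0..x}"
begin

lemma has_real_derivative_eta:
  assumes "0 < x"
  shows "(eta \<rho> has_real_derivative 1 / \<rho> x) (at x)"
proof -
  have "isCont \<rho> x"
    using assms density_differentiable differentiable_imp_continuous_within by blast
  then have "isCont (\<lambda>s. 1 / \<rho> s) x"
    using assms density_pos[of x] by (auto intro!: continuous_intros)
  then have "((\<lambda>y. integral {0..y} (\<lambda>s. 1 / \<rho> s)) has_vector_derivative 1 / \<rho> x)
      (at x within {0..x+1})"
    using integral_has_vector_derivative_continuous_at[of "\<lambda>s. 1 / \<rho> s" 0 "x+1" x "{}"]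
      inverse_density_integrable[of "x+1"] assms continuous_at_imp_continuous_at_within
    by auto
  moreover have "at x within {0..x+1} = at x"
    by (rule at_within_interior) (use assms in auto)
  ultimately show ?thesis
    by (simp add: eta_def[abs_def] has_real_derivative_iff_has_vector_derivative)
qed

lemma isCont_eta: "0 < x \<Longrightarrow> isCont (eta \<rho>) x"
  using has_real_derivative_eta DERIV_isCont by blast

lemma eta_strict_mono:
  assumes "0 < x" "x < y"
  shows "eta \<rho> x < eta \<rho> y"
proof (rule DERIV_pos_imp_increasing[where f = "eta \<rho>", OF \<open>x < y\<close>])
  fix z assume "x \<le> z" "z \<le> y"
  then have "0 < z" using assms by simp
  then show "\<exists>d. (eta \<rho> has_real_derivative d) (at z) \<and> 0 < d"
    using has_real_derivative_eta[of z] density_pos[of z] by (intro exI[of _ "1 / \<rho> z"]) simp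
qed

lemma eta_nonneg:
  assumes "0 < x"
  shows "0 \<le> eta \<rho> x"
proof -
  let ?g = "\<lambda>s. if s = 0 then 0 else 1 / \<rho> s"
  have "?g integrable_on {0..x}"
    by (rule integrable_spike[of "\<lambda>s. 1 / \<rho> s" _ "{0}"])
      (use inverse_density_integrable assms in auto)
  then have "0 \<le> integral {0..x} ?g"
    by (rule integral_nonneg) (auto intro!: less_imp_le density_pos)
  also have "integral {0..x} ?g = eta \<rho> x"
    unfolding eta_def by (rule integral_spike[of "{0}"]) auto
  finally show ?thesis .
qed

lemma eta_pos: "0 < x \<Longrightarrow> 0 < eta \<rho> x"
  using eta_nonneg[of "x/2"] eta_strict_mono[of "x/2" x] by auto

lemma pres_of_eta_eta:
  assumes "0 < x"
  shows "pres_of_eta \<rho> (eta \<rho> x) = x"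
  unfolding pres_of_eta_def
proof (rule the_equality)
  fix y assume "0 < y \<and> eta \<rho> y = eta \<rho> x"
  then show "y = x"
    using eta_strict_mono[of x y] eta_strict_mono[of y x] assms by (cases x y rule: linorder_cases) auto
qed (use assms in auto)

lemma has_real_derivative_pres_of_eta:
  assumes x: "0 < x"
  shows "(pres_of_eta \<rho> has_real_derivative \<rho> x) (at (eta \<rho> x))"
proof -
  have inverse: "\<And>z. 0 < z \<Longrightarrow> pres_of_eta \<rho> (eta \<rho> z) = z"
    using pres_of_eta_eta by blast
  have surj: "eta \<rho> (pres_of_eta \<rho> y) = y" if y: "eta \<rho> (x/2) < y" "y < eta \<rho> (2*x)" for y
  proof -
    have "continuous_on {x/2..2*x} (eta \<rho>)"
      using x by (intro continuous_at_imp_continuous_on) (auto intro: isCont_eta)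
    then obtain z where "x/2 \<le> z" "z \<le> 2*x" "eta \<rho> z = y"
      using IVT'[of "eta \<rho>" "x/2" y "2*x"] y x by fastforce
    then show ?thesis using inverse[of z] x by auto
  qed
  have "isCont (pres_of_eta \<rho>) (eta \<rho> x)"
    by (rule isCont_inverse_function2[of "x/2" x "2*x"]) (use x inverse isCont_eta in auto)
  then have "(pres_of_eta \<rho> has_real_derivative inverse (1 / \<rho> x)) (at (eta \<rho> x))"
    using inverse[OF x] has_real_derivative_eta[OF x] density_pos[OF x] surj
      eta_strict_mono[of "x/2" x] eta_strict_mono[of x "2*x"] x
    by (intro DERIV_inverse_function[where a="eta \<rho> (x/2)" and b="eta \<rho> (2*x)"]) auto
  then show ?thesis by simp
qed

lemma n_index_eta:
  assumes x: "0 < x"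
  shows "n_index \<rho> (eta \<rho> x) = eta \<rho> x * deriv \<rho> x"
proof -
  have "(\<rho> has_real_derivative deriv \<rho> x) (at (pres_of_eta \<rho> (eta \<rho> x)))"
    using pres_of_eta_eta[OF x] density_differentiable[OF x] DERIV_deriv_iff_real_differentiable
    by simp
  from DERIV_chain2[OF this has_real_derivative_pres_of_eta[OF x]]
  have "deriv (\<lambda>y. \<rho> (pres_of_eta \<rho> y)) (eta \<rho> x) = deriv \<rho> x * \<rho> x"
    by (rule DERIV_imp_deriv)
  then show ?thesis
    using pres_of_eta_eta[OF x] density_pos[OF x] by (simp add: n_index_def)
qed

end

lemma Phi_compactified_mult:
  fixes u q :: real
  assumes "1 + u \<noteq> 0" "1 + q \<noteq> 0"
  shows "Phi (u / (1 + u)) (q / (1 + q)) * ((1 + u) * (1 + q)) = u + 3 * q - 3"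
proof -
  let ?U = "u / (1 + u)" and ?Q = "q / (1 + q)"
  have "Phi ?U ?Q * ((1 + u) * (1 + q))
      = ((4 - 7 * ?Q) * (1 + q)) * (?U * (1 + u)) - 3 * ((1 - 2 * ?Q) * (1 + q)) * (1 + u)"
    unfolding Phi_def by algebra
  also have "\<dots> = (4 - 3 * q) * u - 3 * (1 - q) * (1 + u)"
    using assms by (simp add: left_diff_distrib)
  also have "\<dots> = u + 3 * q - 3" by algebra
  finally show ?thesis .
qed

locale regular_fluid = barotropic_eos +
  fixes R :: real and m p :: "real \<Rightarrow> real" and pc :: real
  assumes regular: "regular_solution \<rho> R m p pc"
begin

lemma central_pressure_pos: "0 < pc"
  and pressure_pos: "r \<in> {0<..<R} \<Longrightarrow> 0 < p r"
  and has_real_derivative_mass: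
    "r \<in> {0<..<R} \<Longrightarrow> (m has_real_derivative 4 * pi * r\<^sup>2 * \<rho> (p r)) (at r)"
  and has_real_derivative_pressure:
    "r \<in> {0<..<R} \<Longrightarrow> (p has_real_derivative - (m r * \<rho> (p r)) / r\<^sup>2) (at r)"
  and mass_tendsto_0: "(m \<longlongrightarrow> 0) (at_right 0)"
  and pressure_tendsto_central: "(p \<longlongrightarrow> pc) (at_right 0)"
  using regular unfolding regular_solution_def by auto

lemma mass_strict_mono:
  assumes "0 < r" "r < s" "s < R"
  shows "m r < m s"
proof (rule DERIV_pos_imp_increasing[where f = m, OF \<open>r < s\<close>])
  fix t assume "r \<le> t" "t \<le> s"
  then have t: "t \<in> {0<..<R}" using assms by auto
  then have "0 < 4 * pi * t\<^sup>2 * \<rho> (p t)"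
    using density_pos pressure_pos by simp
  with has_real_derivative_mass[OF t] show "\<exists>d. (m has_real_derivative d) (at t) \<and> 0 < d"
    by blast
qed

lemma mass_pos:
  assumes "0 < r" "r < R"
  shows "0 < m r"
proof -
  have "\<forall>\<^sub>F s in at_right 0. m s \<le> m (r/2)"
    unfolding eventually_at_right_field using assms mass_strict_mono[of _ "r/2"]
    by (intro exI[of _ "r/2"]) (auto intro: less_imp_le)
  then have "0 \<le> m (r/2)"
    by (intro tendsto_upperbound[OF mass_tendsto_0]) simp_all
  then show ?thesis using mass_strict_mono[of "r/2" r] assms by simp
qed

lemma has_real_derivative_eta_pressure:
  assumes "r \<in> {0<..<R}"
  shows "((\<lambda>s. eta \<rho> (p s)) has_real_derivative - m r / r\<^sup>2) (at r)"
proof -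
  have "((\<lambda>s. eta \<rho> (p s)) has_real_derivative 1 / \<rho> (p r) * (- (m r * \<rho> (p r)) / r\<^sup>2)) (at r)"
    using assms
    by (intro DERIV_chain2[OF has_real_derivative_eta] has_real_derivative_pressure pressure_pos)
  then show ?thesis using density_pos[OF pressure_pos[OF assms]] by simp
qed

lemma has_real_derivative_density:
  assumes "r \<in> {0<..<R}"
  shows "((\<lambda>s. \<rho> (p s)) has_real_derivative deriv \<rho> (p r) * (- (m r * \<rho> (p r)) / r\<^sup>2)) (at r)"
  using assms density_differentiable[OF pressure_pos[OF assms]]
  by (intro DERIV_chain2[OF _ has_real_derivative_pressure])
    (auto simp: DERIV_deriv_iff_real_differentiable)

\<comment> \<open>The function \<open>G = m \<eta> (u + 3q - 3)\<close>, with \<open>u\<close> and \<open>q\<close> as in \<open>U_var\<close> and \<open>Q_var\<close>.\<close>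
definition Phi_numerator :: "real \<Rightarrow> real" where
  "Phi_numerator r =
     4 * pi * r ^ 3 * \<rho> (p r) * eta \<rho> (p r) + 3 * (m r)\<^sup>2 / r - 3 * m r * eta \<rho> (p r)"

lemma has_real_derivative_Phi_numerator:
  assumes r: "r \<in> {0<..<R}"
  shows "(Phi_numerator has_real_derivative
      4 * pi * r * \<rho> (p r) * m r * (5 - eta \<rho> (p r) * deriv \<rho> (p r))) (at r)"
proof -
  let ?d = "\<rho> (p r)" and ?e = "eta \<rho> (p r)"
    and ?d' = "deriv \<rho> (p r) * (- (m r * \<rho> (p r)) / r\<^sup>2)"
  have "(Phi_numerator has_real_derivative
      4 * pi * (3 * r\<^sup>2 * ?d * ?e + r ^ 3 * ?d' * ?e + r ^ 3 * ?d * (- m r / r\<^sup>2))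
      + 3 * (2 * m r * (4 * pi * r\<^sup>2 * ?d) * r - (m r)\<^sup>2) / r\<^sup>2
      - 3 * (4 * pi * r\<^sup>2 * ?d * ?e + m r * (- m r / r\<^sup>2))) (at r)"
    unfolding Phi_numerator_def[abs_def] using r
    by (auto intro!: derivative_eq_intros has_real_derivative_mass has_real_derivative_density
        has_real_derivative_eta_pressure simp: field_simps power2_eq_square power3_eq_cube)
  then show ?thesis
    using r by (simp add: field_simps power2_eq_square power3_eq_cube)
qed

lemma Phi_numerator_strict_mono:
  assumes n_lt_5: "\<And>x. 0 < x \<Longrightarrow> n_index \<rho> (eta \<rho> x) < 5"
    and "0 < r" "r < s" "s < R"
  shows "Phi_numerator r < Phi_numerator s"
proof (rule DERIV_pos_imp_increasing[where f = Phi_numerator, OF \<open>r < s\<close>])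
  fix t assume "r \<le> t" "t \<le> s"
  then have t: "t \<in> {0<..<R}" using assms by auto
  have "eta \<rho> (p t) * deriv \<rho> (p t) < 5"
    using n_lt_5[OF pressure_pos[OF t]] n_index_eta[OF pressure_pos[OF t]] by simp
  then have "0 < 4 * pi * t * \<rho> (p t) * m t * (5 - eta \<rho> (p t) * deriv \<rho> (p t))"
    using t density_pos[OF pressure_pos[OF t]] mass_pos[of t] by simp
  with has_real_derivative_Phi_numerator[OF t]
  show "\<exists>d. (Phi_numerator has_real_derivative d) (at t) \<and> 0 < d"
    by blast
qed

lemma Phi_numerator_pos:
  assumes n_lt_5: "\<And>x. 0 < x \<Longrightarrow> n_index \<rho> (eta \<rho> x) < 5"
    and r: "0 < r" "r < R"
  shows "0 < Phi_numerator r"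
proof -
  define H where "H s = 4 * pi * s ^ 3 * \<rho> (p s) * eta \<rho> (p s) - 3 * m s * eta \<rho> (p s)" for s
  have "isCont \<rho> pc"
    using density_differentiable[OF central_pressure_pos] by (rule differentiable_imp_continuous_within)
  with isCont_eta[OF central_pressure_pos]
  have "((\<lambda>s. \<rho> (p s)) \<longlongrightarrow> \<rho> pc) (at_right 0)"
    and "((\<lambda>s. eta \<rho> (p s)) \<longlongrightarrow> eta \<rho> pc) (at_right 0)"
    by (auto intro: isCont_tendsto_compose[OF _ pressure_tendsto_central])
  then have "(H \<longlongrightarrow> 4 * pi * 0 ^ 3 * \<rho> pc * eta \<rho> pc - 3 * 0 * eta \<rho> pc) (at_right 0)"
    unfolding H_def by (intro tendsto_intros mass_tendsto_0 tendsto_ident_at)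
  then have lim: "(H \<longlongrightarrow> 0) (at_right 0)"
    by simp
  have "\<forall>\<^sub>F s in at_right 0. H s \<le> Phi_numerator (r/2)"
    unfolding eventually_at_right_field
  proof (intro exI[of _ "r/2"] conjI allI impI)
    fix s assume s: "0 < s" "s < r/2"
    \<comment> \<open>Dropping the term \<open>3 m\<^sup>2/r \<ge> 0\<close>, whose limit at the centre is not known a priori.\<close>
    have "H s \<le> Phi_numerator s" unfolding H_def Phi_numerator_def using s by simp
    also have "\<dots> < Phi_numerator (r/2)" using Phi_numerator_strict_mono[OF n_lt_5] s r by simp
    finally show "H s \<le> Phi_numerator (r/2)" by simp
  qed (use r in simp)
  from tendsto_upperbound[OF lim this] have "0 \<le> Phi_numerator (r/2)"
    by simp
  then show ?thesis using Phi_numerator_strict_mono[OF n_lt_5, of "r/2" r] r by simp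
qed

lemma Phi_pos:
  assumes n_lt_5: "\<And>x. 0 < x \<Longrightarrow> n_index \<rho> (eta \<rho> x) < 5"
    and r: "r \<in> {0<..<R}"
  shows "0 < Phi (U_var \<rho> m p r) (Q_var \<rho> m p r)"
proof -
  define u where "u = 4 * pi * r ^ 3 * \<rho> (p r) / m r"
  define q where "q = m r / (r * eta \<rho> (p r))"
  have pos: "0 < m r" "0 < eta \<rho> (p r)" "0 < \<rho> (p r)"
    using r mass_pos pressure_pos eta_pos density_pos by auto
  then have "0 < u" "0 < q" using r by (simp_all add: u_def q_def)
  have "u + 3 * q - 3 = Phi_numerator r / (m r * eta \<rho> (p r))"
    using pos r
    by (simp add: u_def q_def Phi_numerator_def field_simps power2_eq_square power3_eq_cube)
  then have "0 < u + 3 * q - 3"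
    using Phi_numerator_pos[OF n_lt_5] r pos by simp
  then have "0 < Phi (u / (1 + u)) (q / (1 + q)) * ((1 + u) * (1 + q))"
    using Phi_compactified_mult[of u q] \<open>0 < u\<close> \<open>0 < q\<close> by simp
  moreover have "0 < (1 + u) * (1 + q)"
    using \<open>0 < u\<close> \<open>0 < q\<close> by simp
  ultimately have "0 < Phi (u / (1 + u)) (q / (1 + q))"
    by (rule zero_less_mult_pos2)
  then show ?thesis by (simp add: U_var_def Q_var_def Let_def u_def q_def)
qed

end

lemma Phi_eq_0_imp_Q_le_half:
  fixes U Q :: real
  assumes "0 \<le> U" "U < 1" "Q < 1" "Phi U Q = 0"
  shows "Q \<le> 1/2"
proof (rule ccontr)
  assume "\<not> Q \<le> 1/2"
  have P: "(4 - 7 * Q) * U = 3 * (1 - 2 * Q)" using assms(4) unfolding Phi_def by simp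
  with \<open>\<not> Q \<le> 1/2\<close> have "(4 - 7 * Q) * U < 0" by simp
  with assms(1) have "4 - 7 * Q < 0" by (simp add: mult_less_0_iff)
  then have "4 - 7 * Q < (4 - 7 * Q) * U" using assms(2) by (simp add: mult_less_cancel_left_neg)
  then show False using P assms(3) by simp
qed

text \<open>\<open>(4 - 7Q, 6 - 7U)\<close> is the gradient of \<open>\<Phi>\<close>, so the left-hand side is \<open>d\<Phi>/d\<lambda>\<close>.\<close>

lemma Phi_derivative_along_field:
  fixes n U Q :: real
  shows "(4 - 7 * Q) * FU n U Q + (6 - 7 * U) * FQ U Q
      = 3 * (1 - 2 * Q) * (1 - U)\<^sup>2 * Q * (5 - n)
        + Phi U Q * (3*U*Q^2 - 2*Q^2 - U^2*Q*n - 4*U^2*Q + 2*U*Q*n - 4*U*Q - Q*n + 7*Q + 4*U^2 - 4*U)"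
  unfolding Phi_def FU_def FQ_def by algebra

theorem mainTheorem8:
  fixes \<rho> :: "real \<Rightarrow> real" and a :: real
  assumes rho_pos: "\<forall>p>0. 0 < \<rho> p"
    and rho_C1: "\<forall>p>0. \<rho> differentiable (at p)" "continuous_on {0<..} (deriv \<rho>)"
    and eta_finite: "\<forall>p>0. (\<lambda>s. 1 / \<rho> s) integrable_on {0..p}"
    and n_bounds: "\<forall>p>0. 0 \<le> n_index \<rho> (eta \<rho> p) \<and> n_index \<rho> (eta \<rho> p) < 5"
    and a_pos: "0 < a"
  shows "(\<forall>R m p pc r. 0 < R \<and> regular_solution \<rho> R m p pc \<and> r \<in> {0<..<R}
            \<longrightarrow> Phi (U_var \<rho> m p r) (Q_var \<rho> m p r) > 0)
       \<and> (\<forall>U Q \<Omega>. U \<in> {0<..<1} \<and> Q \<in> {0<..<1} \<and> \<Omega> \<in> {0<..<1} \<and> Phi U Q = 0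
            \<longrightarrow> Q \<le> 1/2 \<and>
                (4 - 7 * Q) * FU (n_Omega \<rho> a \<Omega>) U Q + (6 - 7 * U) * FQ U Q
                  = 3 * (1 - 2 * Q) * (1 - U)\<^sup>2 * Q * (5 - n_Omega \<rho> a \<Omega>))"
proof -
  interpret barotropic_eos \<rho>
    by unfold_locales (use rho_pos rho_C1(1) eta_finite in auto)
  have n_lt_5: "\<And>x. 0 < x \<Longrightarrow> n_index \<rho> (eta \<rho> x) < 5"
    using n_bounds by simp
  have "Phi (U_var \<rho> m p r) (Q_var \<rho> m p r) > 0"
    if "regular_solution \<rho> R m p pc" "r \<in> {0<..<R}" for R m p pc r
  proof -
    interpret regular_fluid \<rho> R m p pc
      by unfold_locales (rule that(1))
    show ?thesis using Phi_pos[OF n_lt_5 that(2)] .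
  qed
  moreover have "Q \<le> 1/2"
    and "(4 - 7 * Q) * FU n U Q + (6 - 7 * U) * FQ U Q = 3 * (1 - 2 * Q) * (1 - U)\<^sup>2 * Q * (5 - n)"
    if "U \<in> {0<..<1}" "Q \<in> {0<..<1}" "Phi U Q = 0" for U Q n
    using that Phi_eq_0_imp_Q_le_half[of U Q] Phi_derivative_along_field[of Q n U] by simp_all
  ultimately show ?thesis by blast
qed

end
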